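(* For integers $n,m$, the inequality \[ 4\,\operatorname{arccosh}\!\left(\frac{\cos(\pi/m)}{\sin(\pi/n)}\right) > 2\log n \] holds whenever $n\ge4, m\ge8$; or $n\ge 6, m\ge 5$; or $n\ge 8, m\ge 4$; or $n\ge 12, m\ge 3$. *)

theory Defs
  imports "HOL-Analysis.Analysis"
begin

end

theory Submission
  imports Defs
begin

text \<open>Since \<open>cosh (ln (sqrt n)) = (n + 1) / (2 * sqrt n)\<close>, the claim says that
  \<open>cos (pi / m) / sin (pi / n)\<close> exceeds \<open>(n + 1) / (2 * sqrt n)\<close>. Bounding \<open>sin (pi / n)\<close>
  above by \<open>pi / n\<close>, and \<open>cos (pi / m)\<close> below by a constant \<open>c\<close> depending on the least
  admissible \<open>m\<close> (\<open>1 - (pi / m)\<^sup>2 / 2\<close> there, or \<open>cos (pi / 3) = 1 / 2\<close> for \<open>m \<ge> 3\<close>),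
  reduces this to \<open>pi * (n + 1) < 2 * c * n * sqrt n\<close>, which holds from the least
  admissible \<open>n\<close> on. Only for \<open>n = 4\<close> is the bound on the sine too weak, and there
  \<open>sin (pi / 4) = sqrt 2 / 2\<close> is used exactly.\<close>

lemma less_arcosh_if_cosh_less:
  fixes t x :: real
  assumes "0 \<le> t" and "cosh t < x"
  shows "t < arcosh x"
proof -
  have "arcosh (cosh t) < arcosh x"
    using assms cosh_real_ge_1[of t] by (subst arcosh_less_iff_real) auto
  then show ?thesis
    using arcosh_cosh_real[OF \<open>0 \<le> t\<close>] by simp
qed

lemma ln_less_two_arcosh:
  fixes N x :: real
  assumes "1 \<le> N" and "(N + 1) / (2 * sqrt N) < x"
  shows "ln N < 2 * arcosh x"
proof -
  have "cosh (ln (sqrt N)) = (N + 1) / (2 * sqrt N)"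
    using assms(1) by (simp add: cosh_ln_real field_simps)
  then have "ln (sqrt N) < arcosh x"
    using assms by (intro less_arcosh_if_cosh_less) auto
  moreover have "ln N = 2 * ln (sqrt N)"
    using assms(1) by (simp add: ln_sqrt)
  ultimately show ?thesis by simp
qed

lemma cos_ge_one_minus_sq_half:
  fixes x :: real
  shows "1 - x\<^sup>2 / 2 \<le> cos x"
proof -
  have "(sin (x / 2))\<^sup>2 \<le> (x / 2)\<^sup>2"
    using abs_sin_x_le_abs_x[of "x / 2"] by (simp only: abs_le_square_iff)
  then show ?thesis
    using cos_double_sin[of "x / 2"] by (simp add: power_divide)
qed

lemma cos_pi_div_mono:
  fixes m M :: real
  assumes "1 \<le> m" and "m \<le> M"
  shows "cos (pi / m) \<le> cos (pi / M)"
proof (rule cos_monotone_0_pi_le)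
  show "0 \<le> pi / M" and "pi / M \<le> pi / m"
    using assms by (auto intro: divide_left_mono)
  show "pi / m \<le> pi"
    using assms by (simp add: field_simps)
qed

lemma cos_pi_div_ge_approx:
  fixes m M :: real
  assumes "0 < m" and "m \<le> M"
  shows "1 - 9.87 / (2 * m\<^sup>2) \<le> cos (pi / M)"
proof -
  have "pi \<le> 3.1416"
    using pi_approx(2) by simp
  then have "pi\<^sup>2 \<le> 3.1416\<^sup>2"
    using pi_gt_zero by (intro power_mono) auto
  also have "\<dots> \<le> 9.87"
    by (simp add: power2_eq_square)
  finally have "pi\<^sup>2 / (2 * M\<^sup>2) \<le> 9.87 / (2 * M\<^sup>2)"
    by (intro divide_right_mono) auto
  also have "\<dots> \<le> 9.87 / (2 * m\<^sup>2)"
    using assms by (intro divide_left_mono mult_left_mono power_mono) auto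
  finally show ?thesis
    using cos_ge_one_minus_sq_half[of "pi / M"] by (simp add: power_divide)
qed

lemma pi_mult_less:
  fixes x y :: real
  assumes "0 \<le> y" and "3.1416 * y < x"
  shows "pi * y < x"
proof -
  have "pi \<le> 3.1416"
    using pi_approx(2) by simp
  then show ?thesis
    using mult_right_mono[of pi "3.1416" y] assms by linarith
qed

lemma ln_less_two_arcosh_cos_div_sin:
  fixes M N c t :: real
  assumes "0 < c" and "c \<le> cos (pi / M)"
    and "2 \<le> N" and "0 \<le> t" and "t\<^sup>2 \<le> N"
    and "pi * (N + 1) < 2 * c * t * N"
  shows "ln N < 2 * arcosh (cos (pi / M) / sin (pi / N))"
proof (rule ln_less_two_arcosh)
  have sin_pos: "0 < sin (pi / N)"
    using assms(3) by (intro sin_gt_zero) (auto simp: field_simps)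
  have sin_le: "sin (pi / N) \<le> pi / N"
    using assms(3) by (intro sin_x_le_x) simp
  have "t \<le> sqrt N"
    using assms(4,5) by (intro real_le_rsqrt) auto
  then have "2 * c * t * N \<le> 2 * c * sqrt N * N"
    using assms(1,3) by (intro mult_right_mono mult_left_mono) auto
  then have "pi * (N + 1) < 2 * c * sqrt N * N"
    using assms(6) by linarith
  then have "(N + 1) / (2 * sqrt N) < c / (pi / N)"
    using assms(3) pi_gt_zero by (simp add: field_simps)
  also have "\<dots> \<le> cos (pi / M) / sin (pi / N)"
    using assms(1,2) sin_pos sin_le by (intro frac_le) auto
  finally show "(N + 1) / (2 * sqrt N) < cos (pi / M) / sin (pi / N)" .
qed (use assms(3) in simp)

lemma ln_4_less_two_arcosh:
  fixes M :: real
  assumes "8 \<le> M"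
  shows "ln 4 < 2 * arcosh (cos (pi / M) / sin (pi / 4))"
proof (rule ln_less_two_arcosh)
  have "sqrt 2 \<le> 1.4143"
    by (rule real_le_lsqrt) (auto simp: power2_eq_square)
  moreover have "1 - 9.87 / (2 * 8\<^sup>2) \<le> cos (pi / M)"
    using assms by (intro cos_pi_div_ge_approx) auto
  ultimately have "(4 + 1) / (2 * sqrt 4) < cos (pi / M) / (sqrt 2 / 2)"
    by (simp add: field_simps)
  then show "(4 + 1) / (2 * sqrt 4) < cos (pi / M) / sin (pi / 4)"
    by (simp add: sin_45)
qed simp

theorem proposition1:
  fixes n m :: int
  assumes "(n \<ge> 4 \<and> m \<ge> 8) \<or> (n \<ge> 6 \<and> m \<ge> 5) \<or> (n \<ge> 8 \<and> m \<ge> 4) \<or> (n \<ge> 12 \<and> m \<ge> 3)"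
  shows "4 * arcosh (cos (pi / real_of_int m) / sin (pi / real_of_int n)) > 2 * ln (real_of_int n)"
proof -
  define N M where "N = real_of_int n" and "M = real_of_int m"
  consider "N = 4" "8 \<le> M" | "5 \<le> N" "8 \<le> M" | "6 \<le> N" "5 \<le> M" | "8 \<le> N" "4 \<le> M"
    | "12 \<le> N" "3 \<le> M"
    using assms unfolding N_def M_def by (cases "n = 4") auto
  then have "ln N < 2 * arcosh (cos (pi / M) / sin (pi / N))"
  proof cases
    case 1
    then show ?thesis
      using ln_4_less_two_arcosh by simp
  next
    case 2
    then show ?thesis
      by (intro ln_less_two_arcosh_cos_div_sin[where c = "1 - 9.87 / (2 * 8\<^sup>2)" and t = "2.23"]
          cos_pi_div_ge_approx pi_mult_less) (auto simp: power2_eq_square)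
  next
    case 3
    then show ?thesis
      by (intro ln_less_two_arcosh_cos_div_sin[where c = "1 - 9.87 / (2 * 5\<^sup>2)" and t = "2.44"]
          cos_pi_div_ge_approx pi_mult_less) (auto simp: power2_eq_square)
  next
    case 4
    then show ?thesis
      by (intro ln_less_two_arcosh_cos_div_sin[where c = "1 - 9.87 / (2 * 4\<^sup>2)" and t = "2.82"]
          cos_pi_div_ge_approx pi_mult_less) (auto simp: power2_eq_square)
  next
    case 5
    then have "1 / 2 \<le> cos (pi / M)"
      using cos_pi_div_mono[of 3 M] by (simp add: cos_60)
    with 5 show ?thesis
      by (intro ln_less_two_arcosh_cos_div_sin[where c = "1 / 2" and t = "3.46"] pi_mult_less)
        (auto simp: power2_eq_square)
  qed
  then show ?thesis
    unfolding N_def M_def by simp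
qed

end
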